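(* Let $\mathcal{C}$ be a class of $\Sigma$-algebras. If $\dot\Sigma^*/{\dot\sim_{\mathcal{C}}}$ is finite, then $\mathbf{T}_{\le 1}/{\sim_{\mathcal{C}}}$ is finite.
   Context: $\Sigma$ is a finite algebraic signature and $V$ a non-empty finite set of variables; $\mathbf{T}$ is the set of $\Sigma$-terms over $V$. A $\Sigma$-algebra has a non-empty finite universe and an interpretation of each function symbol; $t \sim_{\mathcal{C}} s$ iff $t$ and $s$ evaluate equally under all valuations in all algebras in $\mathcal{C}$. $\mathrm{vo}(t)$ is the number of variable occurrences in $t$, and $\mathbf{T}_{\le k}=\{t\in\mathbf{T} : \mathrm{vo}(t)\le k\}$. $\dot\Sigma$ is the (possibly infinite) set of characters $f(t_1,\dots,t_{i-1},\_,t_{i+1},\dots,t_n)$ where $f\in\Sigma$ is $n$-ary, $i\in\{1,\dots,n\}$, and each $t_j$ ($j\ne i$) is a term with $\mathrm{vo}(t_j)=0$. For a word $w\in\dot\Sigma^*$ and a term $t$, $w[t]$ is defined by $\varepsilon[t] = t$ and $(f(t_1,\dots,\_,\dots,t_n)\,w')[t] = f(t_1,\dots,t_{i-1},w'[t],t_{i+1},\dots,t_n)$. The equivalence $\dot\sim_{\mathcal{C}}$ on $\dot\Sigma^*$ is: $w\ \dot\sim_{\mathcal{C}}\ w'$ iff $w[a]\sim_{\mathcal{C}} w'[a]$, where $a\in V$ is any variable. *)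

theory Defs
  imports Main
begin

datatype ('f, 'v) trm = Var 'v | Fun 'f "('f, 'v) trm list"

fun wf_trm :: "'f set \<Rightarrow> ('f \<Rightarrow> nat) \<Rightarrow> 'v set \<Rightarrow> ('f, 'v) trm \<Rightarrow> bool" where
  "wf_trm Sig ar V (Var x) = (x \<in> V)"
| "wf_trm Sig ar V (Fun f ts) = (f \<in> Sig \<and> length ts = ar f \<and> (\<forall>t\<in>set ts. wf_trm Sig ar V t))"

definition Terms :: "'f set \<Rightarrow> ('f \<Rightarrow> nat) \<Rightarrow> 'v set \<Rightarrow> ('f, 'v) trm set" where
  "Terms Sig ar V = {t. wf_trm Sig ar V t}"

fun vo :: "('f, 'v) trm \<Rightarrow> nat" where
  "vo (Var x) = 1"
| "vo (Fun f ts) = sum_list (map vo ts)"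

definition Terms_le :: "'f set \<Rightarrow> ('f \<Rightarrow> nat) \<Rightarrow> 'v set \<Rightarrow> nat \<Rightarrow> ('f, 'v) trm set" where
  "Terms_le Sig ar V k = {t \<in> Terms Sig ar V. vo t \<le> k}"

type_synonym ('f, 'a) alg = "'a set \<times> ('f \<Rightarrow> 'a list \<Rightarrow> 'a)"

definition is_algebra :: "'f set \<Rightarrow> ('f \<Rightarrow> nat) \<Rightarrow> ('f, 'a) alg \<Rightarrow> bool" where
  "is_algebra Sig ar Al \<longleftrightarrow> finite (fst Al) \<and> fst Al \<noteq> {} \<and>
     (\<forall>f\<in>Sig. \<forall>as. length as = ar f \<and> set as \<subseteq> fst Al \<longrightarrow> snd Al f as \<in> fst Al)"

fun eval :: "('f \<Rightarrow> 'a list \<Rightarrow> 'a) \<Rightarrow> ('v \<Rightarrow> 'a) \<Rightarrow> ('f, 'v) trm \<Rightarrow> 'a" where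
  "eval I \<sigma> (Var x) = \<sigma> x"
| "eval I \<sigma> (Fun f ts) = I f (map (eval I \<sigma>) ts)"

definition equiv_C :: "('f, 'a) alg set \<Rightarrow> 'v set \<Rightarrow> ('f, 'v) trm \<Rightarrow> ('f, 'v) trm \<Rightarrow> bool" where
  "equiv_C C V t s \<longleftrightarrow>
     (\<forall>Al\<in>C. \<forall>\<sigma>. (\<forall>x\<in>V. \<sigma> x \<in> fst Al) \<longrightarrow> eval (snd Al) \<sigma> t = eval (snd Al) \<sigma> s)"

definition equiv_C_rel :: "('f, 'a) alg set \<Rightarrow> 'v set \<Rightarrow> ('f, 'v) trm set \<Rightarrow> (('f, 'v) trm \<times> ('f, 'v) trm) set" where
  "equiv_C_rel C V X = {(t, s). t \<in> X \<and> s \<in> X \<and> equiv_C C V t s}"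

text \<open>Dotted characters f(t_1,...,t_{i-1},_,t_{i+1},...,t_n): represented as (f, pre, post)
  with pre = [t_1..t_{i-1}], post = [t_{i+1}..t_n] ground (vo = 0) terms.\<close>
type_synonym ('f, 'v) dchar = "'f \<times> ('f, 'v) trm list \<times> ('f, 'v) trm list"

definition DSig :: "'f set \<Rightarrow> ('f \<Rightarrow> nat) \<Rightarrow> 'v set \<Rightarrow> ('f, 'v) dchar set" where
  "DSig Sig ar V = {(f, pre, post). f \<in> Sig \<and> length pre + 1 + length post = ar f \<and>
      (\<forall>t\<in>set pre \<union> set post. t \<in> Terms Sig ar V \<and> vo t = 0)}"

fun plug :: "('f, 'v) dchar list \<Rightarrow> ('f, 'v) trm \<Rightarrow> ('f, 'v) trm" where
  "plug [] t = t"
| "plug ((f, pre, post) # w) t = Fun f (pre @ [plug w t] @ post)"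

definition DWords :: "'f set \<Rightarrow> ('f \<Rightarrow> nat) \<Rightarrow> 'v set \<Rightarrow> ('f, 'v) dchar list set" where
  "DWords Sig ar V = {w. set w \<subseteq> DSig Sig ar V}"

text \<open>w dot-equivalent w' iff w[a] ~_C w'[a]; the choice of a in V is irrelevant, we quantify over all a.\<close>
definition dequiv_C :: "('f, 'a) alg set \<Rightarrow> 'v set \<Rightarrow> ('f, 'v) dchar list \<Rightarrow> ('f, 'v) dchar list \<Rightarrow> bool" where
  "dequiv_C C V w w' \<longleftrightarrow> (\<forall>a\<in>V. equiv_C C V (plug w (Var a)) (plug w' (Var a)))"

definition dequiv_C_rel :: "'f set \<Rightarrow> ('f \<Rightarrow> nat) \<Rightarrow> ('f, 'a) alg set \<Rightarrow> 'v set \<Rightarrow> (('f, 'v) dchar list \<times> ('f, 'v) dchar list) set" where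
  "dequiv_C_rel Sig ar C V = {(w, w'). w \<in> DWords Sig ar V \<and> w' \<in> DWords Sig ar V \<and> dequiv_C C V w w'}"

end

theory Submission
  imports Defs
begin

text \<open>A term with at most one variable occurrence has the form \<open>w[b]\<close> with \<open>w \<in> \<dot>\<Sigma>\<^sup>*\<close> and
  \<open>b\<close> a variable or a constant. Since the side arguments of the characters of \<open>w\<close> are
  ground, \<open>w \<dot>\<sim> w'\<close> implies \<open>w[b] \<sim> w'[b]\<close> for every term \<open>b\<close>: evaluate \<open>w[a]\<close> under the
  valuation sending \<open>a\<close> to the value of \<open>b\<close>. So the class of \<open>w[b]\<close> depends only on the
  class of \<open>w\<close> and on \<open>b\<close>, which leaves finitely many classes.\<close>

lemma eval_vo_0_indep: "vo t = 0 \<Longrightarrow> eval I \<sigma> t = eval I \<sigma>' t"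
proof (induction t)
  case (Var x)
  then show ?case by simp
next
  case (Fun f ts)
  then have "\<forall>t\<in>set ts. vo t = 0" by (simp add: sum_list_eq_0_iff)
  with Fun.IH show ?case by (simp cong: map_cong)
qed

lemma eval_in_carrier:
  assumes "is_algebra Sig ar Al" and "wf_trm Sig ar V t" and "\<forall>x\<in>V. \<sigma> x \<in> fst Al"
  shows "eval (snd Al) \<sigma> t \<in> fst Al"
  using assms(2)
proof (induction t)
  case (Var x)
  with assms(3) show ?case by simp
next
  case (Fun f ts)
  then have "set (map (eval (snd Al) \<sigma>) ts) \<subseteq> fst Al" by auto
  with Fun.prems assms(1) show ?case by (simp add: is_algebra_def)
qed

lemma equiv_equiv_C_rel: "equiv X (equiv_C_rel C V X)"
  by (rule equivI) (auto simp: equiv_C_rel_def equiv_C_def refl_on_def sym_def trans_def)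

definition ground_dword :: "('f, 'v) dchar list \<Rightarrow> bool" where
  "ground_dword w \<longleftrightarrow> (\<forall>(f, pre, post)\<in>set w. \<forall>t\<in>set pre \<union> set post. vo t = 0)"

lemma ground_dword_Cons [simp]:
  "ground_dword ((f, pre, post) # w) \<longleftrightarrow>
     (\<forall>t\<in>set pre \<union> set post. vo t = 0) \<and> ground_dword w"
  by (simp add: ground_dword_def)

lemma ground_dword_if_DWords: "w \<in> DWords Sig ar V \<Longrightarrow> ground_dword w"
  by (auto simp: DWords_def DSig_def ground_dword_def)

lemma eval_plug_cong:
  assumes "ground_dword w" and "eval I \<sigma> t = eval I \<sigma>' s"
  shows "eval I \<sigma> (plug w t) = eval I \<sigma>' (plug w s)"
  using assms(1)
proof (induction w)
  case Nil
  with assms(2) show ?case by simp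
next
  case (Cons c w)
  obtain f pre post where c: "c = (f, pre, post)" by (cases c)
  with Cons.prems have pre: "map (eval I \<sigma>) pre = map (eval I \<sigma>') pre"
    and post: "map (eval I \<sigma>) post = map (eval I \<sigma>') post"
    by (auto intro!: map_cong eval_vo_0_indep)
  from Cons.prems have "ground_dword w" by (simp add: c)
  then show ?case by (simp add: c pre post Cons.IH)
qed

lemma vo_plug: "ground_dword w \<Longrightarrow> vo (plug w t) = vo t"
  by (induction w t rule: plug.induct) (simp_all add: sum_list_eq_0_iff)

lemma wf_trm_plug:
  "w \<in> DWords Sig ar V \<Longrightarrow> wf_trm Sig ar V t \<Longrightarrow> wf_trm Sig ar V (plug w t)"
  by (induction w t rule: plug.induct) (auto simp: DWords_def DSig_def Terms_def)

lemma equiv_C_plug_if_dequiv_C: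
  assumes "ground_dword w" and "ground_dword w'" and "dequiv_C C V w w'" and "a \<in> V"
    and s_in_carrier: "\<forall>Al\<in>C. \<forall>\<sigma>. (\<forall>x\<in>V. \<sigma> x \<in> fst Al) \<longrightarrow> eval (snd Al) \<sigma> s \<in> fst Al"
  shows "equiv_C C V (plug w s) (plug w' s)"
  unfolding equiv_C_def
proof (intro ballI allI impI)
  fix Al \<sigma>
  assume Al: "Al \<in> C" and \<sigma>: "\<forall>x\<in>V. \<sigma> x \<in> fst Al"
  define \<sigma>' where "\<sigma>' = \<sigma>(a := eval (snd Al) \<sigma> s)"
  have \<sigma>': "\<forall>x\<in>V. \<sigma>' x \<in> fst Al"
    using \<sigma> s_in_carrier Al by (simp add: \<sigma>'_def)
  have s_as_var: "eval (snd Al) \<sigma> s = eval (snd Al) \<sigma>' (Var a)"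
    by (simp add: \<sigma>'_def)
  have "eval (snd Al) \<sigma> (plug w s) = eval (snd Al) \<sigma>' (plug w (Var a))"
    using eval_plug_cong[OF assms(1) s_as_var] .
  also have "\<dots> = eval (snd Al) \<sigma>' (plug w' (Var a))"
    using assms(3,4) Al \<sigma>' by (simp add: dequiv_C_def equiv_C_def)
  also have "\<dots> = eval (snd Al) \<sigma> (plug w' s)"
    using eval_plug_cong[OF assms(2) s_as_var[symmetric]] .
  finally show "eval (snd Al) \<sigma> (plug w s) = eval (snd Al) \<sigma> (plug w' s)" .
qed

definition atomic_terms :: "'f set \<Rightarrow> ('f \<Rightarrow> nat) \<Rightarrow> 'v set \<Rightarrow> ('f, 'v) trm set" where
  "atomic_terms Sig ar V = Var ` V \<union> (\<lambda>c. Fun c []) ` {c \<in> Sig. ar c = 0}"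

lemma finite_atomic_terms: "finite Sig \<Longrightarrow> finite V \<Longrightarrow> finite (atomic_terms Sig ar V)"
  by (simp add: atomic_terms_def)

lemma atomic_terms_wf_vo:
  "b \<in> atomic_terms Sig ar V \<Longrightarrow> wf_trm Sig ar V b \<and> vo b \<le> 1"
  by (auto simp: atomic_terms_def)

lemma plug_atomic_in_Terms_le:
  "w \<in> DWords Sig ar V \<Longrightarrow> b \<in> atomic_terms Sig ar V \<Longrightarrow> plug w b \<in> Terms_le Sig ar V 1"
  using atomic_terms_wf_vo[of b]
  by (simp add: Terms_le_def Terms_def wf_trm_plug vo_plug ground_dword_if_DWords)

lemma split_list_sum_le_1:
  fixes g :: "'a \<Rightarrow> nat"
  assumes "xs \<noteq> []" and "sum_list (map g xs) \<le> 1"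
  shows "\<exists>pre u post. xs = pre @ [u] @ post \<and> (\<forall>x\<in>set pre \<union> set post. g x = 0)"
  using assms
proof (induction xs)
  case Nil
  then show ?case by simp
next
  case (Cons y ys)
  show ?case
  proof (cases "g y = 0 \<and> ys \<noteq> []")
    case True
    with Cons obtain pre u post
      where "ys = pre @ [u] @ post" and "\<forall>x\<in>set pre \<union> set post. g x = 0"
      by auto
    with True show ?thesis by (intro exI[of _ "y # pre"]) auto
  next
    case False
    from Cons.prems have "g y + sum_list (map g ys) \<le> 1" by simp
    then have "sum_list (map g ys) = 0" if "g y \<noteq> 0" using that by linarith
    with False have "\<forall>x\<in>set ys. g x = 0" by (cases "ys = []") auto
    then show ?thesis by (intro exI[of _ "[]"]) auto
  qed
qed

lemma Terms_le_1_plug_atomic: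
  assumes "wf_trm Sig ar V t" and "vo t \<le> 1"
  shows "\<exists>w\<in>DWords Sig ar V. \<exists>b\<in>atomic_terms Sig ar V. t = plug w b"
  using assms
proof (induction t)
  case (Var x)
  then show ?case
    by (intro bexI[of _ "[]"] bexI[of _ "Var x"]) (auto simp: DWords_def atomic_terms_def)
next
  case (Fun f ts)
  show ?case
  proof (cases "ts = []")
    case True
    with Fun.prems show ?thesis
      by (intro bexI[of _ "[]"] bexI[of _ "Fun f []"]) (auto simp: DWords_def atomic_terms_def)
  next
    case False
    with Fun.prems obtain pre u post
      where ts: "ts = pre @ [u] @ post" and "\<forall>t\<in>set pre \<union> set post. vo t = 0"
      using split_list_sum_le_1[of ts vo] by auto
    with Fun.prems have "(f, pre, post) \<in> DSig Sig ar V"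
      by (auto simp: DSig_def Terms_def)
    moreover obtain w b where "w \<in> DWords Sig ar V" "b \<in> atomic_terms Sig ar V" "u = plug w b"
      using Fun.IH[of u] Fun.prems ts by auto
    ultimately show ?thesis
      using ts by (intro bexI[of _ "(f, pre, post) # w"] bexI[of _ b]) (auto simp: DWords_def)
  qed
qed

lemma equiv_C_class_plug_atomic:
  assumes "\<forall>Al\<in>C. is_algebra Sig ar Al" and "V \<noteq> {}"
    and w: "w \<in> DWords Sig ar V" and b: "b \<in> atomic_terms Sig ar V"
  defines "R \<equiv> equiv_C_rel C V (Terms_le Sig ar V 1)"
  shows "R `` {plug w b} = R `` ((\<lambda>w'. plug w' b) ` (dequiv_C_rel Sig ar C V `` {w}))"
proof -
  obtain a where "a \<in> V" using assms(2) by blast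
  have b_in_carrier: "\<forall>Al\<in>C. \<forall>\<sigma>. (\<forall>x\<in>V. \<sigma> x \<in> fst Al) \<longrightarrow> eval (snd Al) \<sigma> b \<in> fst Al"
    using assms(1) eval_in_carrier atomic_terms_wf_vo[OF b] by blast
  have "R `` {plug w' b} = R `` {plug w b}" if "(w, w') \<in> dequiv_C_rel Sig ar C V" for w'
  proof -
    from that have w': "w' \<in> DWords Sig ar V" and "dequiv_C C V w' w"
      by (auto simp: dequiv_C_rel_def dequiv_C_def equiv_C_def)
    then have "equiv_C C V (plug w' b) (plug w b)"
      using \<open>a \<in> V\<close> w b_in_carrier
      by (intro equiv_C_plug_if_dequiv_C) (auto simp: ground_dword_if_DWords)
    moreover have "plug w' b \<in> Terms_le Sig ar V 1" and "plug w b \<in> Terms_le Sig ar V 1"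
      using w w' b by (simp_all only: plug_atomic_in_Terms_le)
    ultimately have "(plug w' b, plug w b) \<in> R"
      by (simp add: R_def equiv_C_rel_def)
    then show ?thesis using equiv_class_eq[OF equiv_equiv_C_rel] by (simp add: R_def)
  qed
  moreover have "(w, w) \<in> dequiv_C_rel Sig ar C V"
    using w by (simp add: dequiv_C_rel_def dequiv_C_def equiv_C_def)
  ultimately show ?thesis by blast
qed

theorem lemma2p11:
  fixes Sig :: "'f set" and ar :: "'f \<Rightarrow> nat" and V :: "'v set"
    and C :: "('f, 'a) alg set"
  assumes "finite Sig" and "finite V" and "V \<noteq> {}"
    and "\<forall>Al\<in>C. is_algebra Sig ar Al"
    and "finite (DWords Sig ar V // dequiv_C_rel Sig ar C V)"
  shows "finite (Terms_le Sig ar V 1 // equiv_C_rel C V (Terms_le Sig ar V 1))"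
proof -
  let ?R = "equiv_C_rel C V (Terms_le Sig ar V 1)"
  let ?D = "dequiv_C_rel Sig ar C V"
  let ?class = "\<lambda>(W, b). ?R `` ((\<lambda>w. plug w b) ` W)"
  have "Terms_le Sig ar V 1 // ?R \<subseteq> ?class ` (DWords Sig ar V // ?D \<times> atomic_terms Sig ar V)"
  proof
    fix Y assume "Y \<in> Terms_le Sig ar V 1 // ?R"
    then obtain t where "t \<in> Terms_le Sig ar V 1" and Y: "Y = ?R `` {t}"
      by (auto simp: quotient_def)
    then obtain w b where w: "w \<in> DWords Sig ar V" and b: "b \<in> atomic_terms Sig ar V"
      and "t = plug w b"
      using Terms_le_1_plug_atomic by (fastforce simp: Terms_le_def Terms_def)
    with Y have "Y = ?class (?D `` {w}, b)"
      using equiv_C_class_plug_atomic[OF assms(4,3)] by simp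
    with w b show "Y \<in> ?class ` (DWords Sig ar V // ?D \<times> atomic_terms Sig ar V)"
      by (auto simp: quotient_def)
  qed
  moreover have "finite (?class ` (DWords Sig ar V // ?D \<times> atomic_terms Sig ar V))"
    using assms(1,2,5) by (simp add: finite_atomic_terms)
  ultimately show ?thesis by (rule finite_subset)
qed

end
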